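(* Let $G=HK$ for two normal subgroups $H$ and $K$ of the finite group $G$. Then for all $m\ge1$, $$\beta(m)\,\frac{d(H,K)}{|M(G,H,K)|}\le d^\wedge_m(H,K)\le\gamma(m)\,d(H,K),$$ where $\beta(m)=\min\{\alpha(m,i):i=1,\dots,k_K(H)\}$ and $\gamma(m)=\max\{\alpha(m,i):i=1,\dots,k_K(H)\}$.
   Context: All groups are finite; ${}^g x=gxg^{-1}$, $[x,y]=xyx^{-1}y^{-1}$. For normal subgroups $H,K$ of $G$, $H\wedge K$ is the group generated by symbols $h\wedge k$ ($h\in H,k\in K$) subject to $hh'\wedge k=({}^h h'\wedge {}^h k)(h\wedge k)$, $h\wedge kk'=(h\wedge k)({}^k h\wedge {}^k k')$, $y\wedge y=1$ for $y\in H\cap K$; $\kappa':H\wedge K\to[H,K]$, $h\wedge k\mapsto[h,k]$, is an epimorphism and $M(G,H,K):=\ker\kappa'$. For $m\ge1$, $d^\wedge_m(H,K)=|\{(h,k)\in H\times K:h^m\wedge k=1\}|/(|H||K|)$; $d(H,K)=|\{(h,k)\in H\times K:hk=kh\}|/(|H||K|)=k_K(H)/|H|$, with $k_K(H)$ the number of $K$-conjugacy classes in $H$. With representatives $h_1,\dots,h_{k_K(H)}$ of these classes, $\alpha(m,i)=|C_K(h_i^m)|/|C_K(h_i)|$. *)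

theory Defs
  imports "HOL-Algebra.Algebra"
begin

definition conjg :: "('a, 'b) monoid_scheme \<Rightarrow> 'a \<Rightarrow> 'a \<Rightarrow> 'a" where
  "conjg G g x = g \<otimes>\<^bsub>G\<^esub> x \<otimes>\<^bsub>G\<^esub> inv\<^bsub>G\<^esub> g"

definition commg :: "('a, 'b) monoid_scheme \<Rightarrow> 'a \<Rightarrow> 'a \<Rightarrow> 'a" where
  "commg G x y = x \<otimes>\<^bsub>G\<^esub> y \<otimes>\<^bsub>G\<^esub> inv\<^bsub>G\<^esub> x \<otimes>\<^bsub>G\<^esub> inv\<^bsub>G\<^esub> y"

text \<open>Words in the generators of the nonabelian exterior product.
  A letter (h, k, True) stands for the generator h \<and> k, a letter (h, k, False)
  for its inverse.\<close>

type_synonym 'a ext_word = "('a \<times> 'a \<times> bool) list"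

definition ext_letters :: "'a set \<Rightarrow> 'a set \<Rightarrow> ('a \<times> 'a \<times> bool) set" where
  "ext_letters H K = {(h, k, b). h \<in> H \<and> k \<in> K}"

definition ext_words :: "'a set \<Rightarrow> 'a set \<Rightarrow> 'a ext_word set" where
  "ext_words H K = {w. set w \<subseteq> ext_letters H K}"

fun letter_inv :: "'a \<times> 'a \<times> bool \<Rightarrow> 'a \<times> 'a \<times> bool" where
  "letter_inv (h, k, b) = (h, k, \<not> b)"

text \<open>The congruence on words generated by free cancellation and the defining
  relations of H \<and> K; two words are equal in H \<and> K iff they are related.\<close>

inductive ext_eq :: "('a, 'b) monoid_scheme \<Rightarrow> 'a set \<Rightarrow> 'a set \<Rightarrow> 'a ext_word \<Rightarrow> 'a ext_word \<Rightarrow> bool"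
  for G H K where
  refl: "w \<in> ext_words H K \<Longrightarrow> ext_eq G H K w w"
| sym: "ext_eq G H K u v \<Longrightarrow> ext_eq G H K v u"
| trans: "ext_eq G H K u v \<Longrightarrow> ext_eq G H K v w \<Longrightarrow> ext_eq G H K u w"
| cong: "ext_eq G H K u v \<Longrightarrow> x \<in> ext_words H K \<Longrightarrow> y \<in> ext_words H K \<Longrightarrow>
           ext_eq G H K (x @ u @ y) (x @ v @ y)"
| cancel: "l \<in> ext_letters H K \<Longrightarrow> ext_eq G H K [l, letter_inv l] []"
| rel_left: "h \<in> H \<Longrightarrow> h' \<in> H \<Longrightarrow> k \<in> K \<Longrightarrow>
           ext_eq G H K [(h \<otimes>\<^bsub>G\<^esub> h', k, True)]
                        [(conjg G h h', conjg G h k, True), (h, k, True)]"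
| rel_right: "h \<in> H \<Longrightarrow> k \<in> K \<Longrightarrow> k' \<in> K \<Longrightarrow>
           ext_eq G H K [(h, k \<otimes>\<^bsub>G\<^esub> k', True)]
                        [(h, k, True), (conjg G k h, conjg G k k', True)]"
| rel_diag: "y \<in> H \<inter> K \<Longrightarrow> ext_eq G H K [(y, y, True)] []"

definition ext_rel :: "('a, 'b) monoid_scheme \<Rightarrow> 'a set \<Rightarrow> 'a set \<Rightarrow> ('a ext_word \<times> 'a ext_word) set" where
  "ext_rel G H K = {(u, v). ext_eq G H K u v}"

text \<open>Elements of H \<and> K: equivalence classes of words.\<close>

definition ext_prod :: "('a, 'b) monoid_scheme \<Rightarrow> 'a set \<Rightarrow> 'a set \<Rightarrow> 'a ext_word set set" where
  "ext_prod G H K = ext_words H K // ext_rel G H K"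

text \<open>Evaluation of a word under \<kappa>': h \<and> k \<mapsto> [h,k].\<close>

definition ext_eval :: "('a, 'b) monoid_scheme \<Rightarrow> 'a ext_word \<Rightarrow> 'a" where
  "ext_eval G w = foldr (\<lambda>(h, k, b) acc.
      (if b then commg G h k else inv\<^bsub>G\<^esub> (commg G h k)) \<otimes>\<^bsub>G\<^esub> acc) w \<one>\<^bsub>G\<^esub>"

definition ext_M :: "('a, 'b) monoid_scheme \<Rightarrow> 'a set \<Rightarrow> 'a set \<Rightarrow> 'a ext_word set set" where
  "ext_M G H K = {C \<in> ext_prod G H K. \<forall>w \<in> C. ext_eval G w = \<one>\<^bsub>G\<^esub>}"

definition ext_trivial :: "('a, 'b) monoid_scheme \<Rightarrow> 'a set \<Rightarrow> 'a set \<Rightarrow> 'a \<Rightarrow> 'a \<Rightarrow> bool" where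
  "ext_trivial G H K h k \<longleftrightarrow> ext_eq G H K [(h, k, True)] []"

definition d_ext :: "('a, 'b) monoid_scheme \<Rightarrow> nat \<Rightarrow> 'a set \<Rightarrow> 'a set \<Rightarrow> real" where
  "d_ext G m H K = real (card {(h, k). h \<in> H \<and> k \<in> K \<and> ext_trivial G H K (h [^]\<^bsub>G\<^esub> m) k})
                   / (real (card H) * real (card K))"

definition d_comm :: "('a, 'b) monoid_scheme \<Rightarrow> 'a set \<Rightarrow> 'a set \<Rightarrow> real" where
  "d_comm G H K = real (card {(h, k). h \<in> H \<and> k \<in> K \<and> h \<otimes>\<^bsub>G\<^esub> k = k \<otimes>\<^bsub>G\<^esub> h})
                   / (real (card H) * real (card K))"

definition centralizer_in :: "('a, 'b) monoid_scheme \<Rightarrow> 'a set \<Rightarrow> 'a \<Rightarrow> 'a set" where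
  "centralizer_in G K x = {k \<in> K. k \<otimes>\<^bsub>G\<^esub> x = x \<otimes>\<^bsub>G\<^esub> k}"

definition alpha :: "('a, 'b) monoid_scheme \<Rightarrow> 'a set \<Rightarrow> nat \<Rightarrow> 'a \<Rightarrow> real" where
  "alpha G K m h = real (card (centralizer_in G K (h [^]\<^bsub>G\<^esub> m))) / real (card (centralizer_in G K h))"

definition K_classes :: "('a, 'b) monoid_scheme \<Rightarrow> 'a set \<Rightarrow> 'a set \<Rightarrow> 'a set set" where
  "K_classes G H K = (\<lambda>h. {conjg G k h | k. k \<in> K}) ` H"

end

theory Submission
  imports Defs
begin

(* For x in H write W(x) = {k in K. x \<and> k = 1} and C_K(x) for the centraliser
   of x in K.  Counting pairs fibrewise over h in H gives
     d^\<and>_m(H,K) = (\<Sum>h. |W(h^m)|) / (|H||K|)   and   d(H,K) = (\<Sum>h. |C_K(h)|) / (|H||K|),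
   so it suffices to compare |W(h^m)| with |C_K(h^m)| = \<alpha>(m,h) |C_K(h)| for every h:
   (1) the commutator map \<kappa>' is well defined on H \<and> K, hence x \<and> k = 1 forces [x,k] = 1,
       i.e. W(x) \<subseteq> C_K(x);
   (2) k \<mapsto> x \<and> k maps C_K(x) into M(G,H,K), and two elements k0, k with the same image
       differ by an element of W(x) (since x \<and> k = (x \<and> k0)(x \<and> k k0^-1) when k0 centralises x),
       so |C_K(x)| \<le> |M(G,H,K)| |W(x)|.
   Finally \<alpha>(m,-) is constant on K-conjugacy classes, so every value \<alpha>(m,h) lies between
   \<beta>(m) and \<gamma>(m); summing the pointwise bounds over H yields the theorem. *)

lemma card_le_card_codomain_mult:
  assumes "finite A" "f ` A \<subseteq> B" "finite B" "\<And>a. a \<in> A \<Longrightarrow> card {x \<in> A. f x = f a} \<le> s"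
  shows "card A \<le> card B * s"
proof -
  have "A = (\<Union>c\<in>f ` A. {x \<in> A. f x = c})" by auto
  then have "card A \<le> (\<Sum>c\<in>f ` A. card {x \<in> A. f x = c})"
    using card_UN_le[of "f ` A" "\<lambda>c. {x \<in> A. f x = c}"] assms(1) by simp
  also have "\<dots> \<le> (\<Sum>c\<in>f ` A. s)"
    using assms(4) by (intro sum_mono) auto
  also have "\<dots> \<le> card B * s"
    using card_mono[OF assms(3,2)] by simp
  finally show ?thesis .
qed

lemma ext_eq_cancel_left:
  assumes l: "l \<in> ext_letters H K" and w: "w \<in> ext_words H K"
    and eq: "ext_eq G H K [l] (l # w)"
  shows "ext_eq G H K [] w"
proof -
  have li: "letter_inv l \<in> ext_letters H K" and inv_inv: "letter_inv (letter_inv l) = l"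
    using l by (cases l; auto simp: ext_letters_def)+
  have words: "[letter_inv l] \<in> ext_words H K" "[] \<in> ext_words H K"
    using li by (auto simp: ext_words_def)
  have inv_l_cancel: "ext_eq G H K [letter_inv l, l] []"
    using ext_eq.cancel[OF li] inv_inv by simp
  have "ext_eq G H K ([letter_inv l] @ [l] @ []) ([letter_inv l] @ (l # w) @ [])"
    using ext_eq.cong[OF eq words] .
  then have "ext_eq G H K [] ([letter_inv l, l] @ w)"
    using ext_eq.trans[OF ext_eq.sym[OF inv_l_cancel]] by simp
  moreover have "ext_eq G H K ([] @ [letter_inv l, l] @ w) ([] @ [] @ w)"
    using ext_eq.cong[OF inv_l_cancel words(2) w] .
  ultimately show ?thesis using ext_eq.trans by fastforce
qed

definition wedge_kernel :: "('a, 'b) monoid_scheme \<Rightarrow> 'a set \<Rightarrow> 'a set \<Rightarrow> 'a \<Rightarrow> 'a set" where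
  "wedge_kernel G H K x = {k \<in> K. ext_trivial G H K x k}"

context group begin

lemma commg_closed [simp]: "h \<in> carrier G \<Longrightarrow> k \<in> carrier G \<Longrightarrow> commg G h k \<in> carrier G"
  by (simp add: commg_def)

lemma conjg_closed [simp]: "g \<in> carrier G \<Longrightarrow> x \<in> carrier G \<Longrightarrow> conjg G g x \<in> carrier G"
  by (simp add: conjg_def)

lemma mult_inv_cancel_left [simp]:
  "x \<in> carrier G \<Longrightarrow> y \<in> carrier G \<Longrightarrow> x \<otimes> (inv x \<otimes> y) = y"
  by (simp add: m_assoc[symmetric])

lemma inv_mult_cancel_left [simp]:
  "x \<in> carrier G \<Longrightarrow> y \<in> carrier G \<Longrightarrow> inv x \<otimes> (x \<otimes> y) = y"
  by (simp add: m_assoc[symmetric])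

lemma commg_eq_one_iff:
  assumes "a \<in> carrier G" "b \<in> carrier G"
  shows "commg G a b = \<one> \<longleftrightarrow> a \<otimes> b = b \<otimes> a"
proof
  assume "commg G a b = \<one>"
  moreover have "commg G a b \<otimes> (b \<otimes> a) = a \<otimes> b"
    using assms by (simp add: commg_def m_assoc)
  ultimately show "a \<otimes> b = b \<otimes> a" using assms by simp
next
  assume "a \<otimes> b = b \<otimes> a"
  then have "commg G a b = b \<otimes> a \<otimes> inv a \<otimes> inv b" by (simp add: commg_def)
  then show "commg G a b = \<one>" using assms by (simp add: m_assoc)
qed

lemma commg_mult_left:
  assumes "h \<in> carrier G" "h' \<in> carrier G" "k \<in> carrier G"
  shows "commg G (h \<otimes> h') k = commg G (conjg G h h') (conjg G h k) \<otimes> commg G h k"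
  using assms by (simp add: commg_def conjg_def m_assoc inv_mult_group)

lemma commg_mult_right:
  assumes "h \<in> carrier G" "k' \<in> carrier G" "k \<in> carrier G"
  shows "commg G h (k \<otimes> k') = commg G h k \<otimes> commg G (conjg G k h) (conjg G k k')"
  using assms by (simp add: commg_def conjg_def m_assoc inv_mult_group)

lemma conjg_mult:
  "g \<in> carrier G \<Longrightarrow> a \<in> carrier G \<Longrightarrow> b \<in> carrier G \<Longrightarrow>
   conjg G g (a \<otimes> b) = conjg G g a \<otimes> conjg G g b"
  by (simp add: conjg_def m_assoc)

lemma conjg_pow:
  assumes "g \<in> carrier G" "a \<in> carrier G"
  shows "conjg G g (a [^] (n::nat)) = conjg G g a [^] n"
  using assms by (induction n) (simp_all add: conjg_def[of G g \<one>] conjg_mult)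

lemma conjg_inv_conjg:
  "g \<in> carrier G \<Longrightarrow> a \<in> carrier G \<Longrightarrow> conjg G (inv g) (conjg G g a) = a"
  by (simp add: conjg_def m_assoc)

lemma ext_eval_Nil [simp]: "ext_eval G [] = \<one>"
  by (simp add: ext_eval_def)

lemma ext_eval_Cons [simp]:
  "ext_eval G ((h, k, b) # w) = (if b then commg G h k else inv (commg G h k)) \<otimes> ext_eval G w"
  by (simp add: ext_eval_def)

lemma ext_eval_closed:
  "set w \<subseteq> carrier G \<times> carrier G \<times> UNIV \<Longrightarrow> ext_eval G w \<in> carrier G"
  by (induction w) (auto simp: ext_eval_def)

lemma ext_eval_append:
  assumes "set u \<subseteq> carrier G \<times> carrier G \<times> UNIV" "set v \<subseteq> carrier G \<times> carrier G \<times> UNIV"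
  shows "ext_eval G (u @ v) = ext_eval G u \<otimes> ext_eval G v"
  using assms(1)
proof (induction u)
  case Nil
  then show ?case using ext_eval_closed[OF assms(2)] by (simp add: ext_eval_def)
next
  case (Cons l u)
  then show ?case
    using ext_eval_closed[OF assms(2)] ext_eval_closed[of u]
    by (cases l) (auto simp: m_assoc)
qed

context
  fixes H K :: "'a set"
  assumes H_normal: "H \<lhd> G" and K_normal: "K \<lhd> G"
begin

lemma H_sub: "H \<subseteq> carrier G" and K_sub: "K \<subseteq> carrier G"
  using H_normal K_normal by (auto dest: normal_imp_subgroup subgroup.subset)

lemma K_subgroup: "subgroup K G"
  using K_normal normal_imp_subgroup by blast

lemma words_in_carrier: "w \<in> ext_words H K \<Longrightarrow> set w \<subseteq> carrier G \<times> carrier G \<times> UNIV"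
  using H_sub K_sub by (auto simp: ext_words_def ext_letters_def)

text \<open>\<kappa>' is well defined: related expressions are words with the same commutator value.
  Both sides of every defining relation evaluate equally by the commutator identities.\<close>

lemma ext_eq_eval:
  assumes "ext_eq G H K u v"
  shows "u \<in> ext_words H K \<and> v \<in> ext_words H K \<and> ext_eval G u = ext_eval G v"
  using assms
proof (induction rule: ext_eq.induct)
  case (cong u v x y)
  then have "ext_eval G (x @ u @ y) = ext_eval G (x @ v @ y)"
    by (simp add: ext_eval_append ext_words_def words_in_carrier)
  with cong show ?case by (simp add: ext_words_def)
next
  case (cancel l)
  then obtain h k b where l: "l = (h, k, b)" and hk: "h \<in> H" "k \<in> K"
    by (cases l) (auto simp: ext_letters_def)
  then have "commg G h k \<in> carrier G" using H_sub K_sub by (meson commg_closed subsetD)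
  then show ?case using hk l by (cases b) (auto simp: ext_words_def ext_letters_def ext_eval_def)
next
  case (rel_left h h' k)
  have "h \<otimes> h' \<in> H" "conjg G h h' \<in> H" "conjg G h k \<in> K"
    using rel_left H_normal K_normal H_sub unfolding conjg_def
    by (auto intro: normal.inv_op_closed2 subgroup.m_closed normal_imp_subgroup)
  moreover have "h \<in> carrier G" "h' \<in> carrier G" "k \<in> carrier G"
    using rel_left H_sub K_sub by auto
  ultimately show ?case
    using rel_left commg_mult_left by (simp add: ext_words_def ext_letters_def ext_eval_def)
next
  case (rel_right h k k')
  have "k \<otimes> k' \<in> K" "conjg G k h \<in> H" "conjg G k k' \<in> K"
    using rel_right H_normal K_normal K_sub unfolding conjg_def
    by (auto intro: normal.inv_op_closed2 subgroup.m_closed normal_imp_subgroup)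
  moreover have "h \<in> carrier G" "k \<in> carrier G" "k' \<in> carrier G"
    using rel_right H_sub K_sub by auto
  ultimately show ?case
    using rel_right commg_mult_right by (simp add: ext_words_def ext_letters_def ext_eval_def)
next
  case (rel_diag y)
  then have "y \<in> carrier G" using H_sub by auto
  then show ?case
    using rel_diag commg_eq_one_iff[of y y] by (simp add: ext_words_def ext_letters_def ext_eval_def)
qed simp_all

lemma wedge_kernel_subset_centralizer:
  assumes x: "x \<in> H"
  shows "wedge_kernel G H K x \<subseteq> centralizer_in G K x"
proof
  fix k assume "k \<in> wedge_kernel G H K x"
  then have k: "k \<in> K" "ext_eq G H K [(x, k, True)] []"
    by (simp_all add: wedge_kernel_def ext_trivial_def)
  have xk: "x \<in> carrier G" "k \<in> carrier G" using x k H_sub K_sub by auto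
  have "commg G x k = \<one>"
    using ext_eq_eval[OF k(2)] xk by simp
  then show "k \<in> centralizer_in G K x"
    using k xk commg_eq_one_iff by (simp add: centralizer_in_def)
qed

text \<open>If k0 centralises x then x \<and> k = (x \<and> k0)(x \<and> k k0^-1); hence x \<and> k0 = x \<and> k
  forces k k0^-1 into W(x).\<close>

lemma equal_wedges_differ_by_kernel:
  assumes x: "x \<in> H" and k0: "k0 \<in> centralizer_in G K x" and k: "k \<in> K"
    and eq: "ext_eq G H K [(x, k0, True)] [(x, k, True)]"
  shows "k \<otimes> inv k0 \<in> wedge_kernel G H K x"
proof -
  define s where "s = k \<otimes> inv k0"
  have k0K: "k0 \<in> K" and comm: "k0 \<otimes> x = x \<otimes> k0"
    using k0 by (auto simp: centralizer_in_def)
  have c: "x \<in> carrier G" "k \<in> carrier G" "k0 \<in> carrier G"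
    using x k k0K H_sub K_sub by auto
  have sK: "s \<in> K" and qK: "inv k0 \<otimes> k \<in> K"
    using k k0K K_subgroup by (simp_all add: s_def subgroup.m_closed subgroup.m_inv_closed)
  have "conjg G k0 x = x"
    using c comm by (simp add: conjg_def m_assoc)
  moreover have "k0 \<otimes> (inv k0 \<otimes> k) = k" "conjg G k0 (inv k0 \<otimes> k) = s"
    using c by (simp_all add: conjg_def s_def m_assoc)
  ultimately have "ext_eq G H K [(x, k, True)] [(x, k0, True), (x, s, True)]"
    using ext_eq.rel_right[where G = G, OF x k0K qK] by simp
  then have "ext_eq G H K [(x, k0, True)] ((x, k0, True) # [(x, s, True)])"
    using ext_eq.trans[OF eq] by simp
  then have "ext_eq G H K [] [(x, s, True)]"
    using x k0K sK by (intro ext_eq_cancel_left) (auto simp: ext_letters_def ext_words_def)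
  then show ?thesis
    using sK by (simp add: wedge_kernel_def ext_trivial_def s_def ext_eq.sym)
qed

text \<open>Step (2): k \<mapsto> x \<and> k maps C_K(x) into M(G,H,K) with fibres no larger than W(x).\<close>

lemma card_centralizer_le_M_wedge_kernel:
  assumes x: "x \<in> H" and finK: "finite K" and finM: "finite (ext_M G H K)"
  shows "card (centralizer_in G K x) \<le> card (ext_M G H K) * card (wedge_kernel G H K x)"
proof (rule card_le_card_codomain_mult[OF _ _ finM])
  define wedge where "wedge k = ext_rel G H K `` {[(x, k, True)]}" for k
  have word: "[(x, k, True)] \<in> ext_words H K" if "k \<in> K" for k
    using x that by (simp add: ext_words_def ext_letters_def)
  show "finite (centralizer_in G K x)" using finK by (simp add: centralizer_in_def)
  show "wedge ` centralizer_in G K x \<subseteq> ext_M G H K"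
  proof safe
    fix k assume k: "k \<in> centralizer_in G K x"
    then have kK: "k \<in> K" and c: "x \<in> carrier G" "k \<in> carrier G" and "x \<otimes> k = k \<otimes> x"
      using x H_sub K_sub by (auto simp: centralizer_in_def)
    then have "commg G x k = \<one>" using commg_eq_one_iff by simp
    moreover have "ext_eval G w = commg G x k" if "w \<in> wedge k" for w
      using that ext_eq_eval[of "[(x, k, True)]" w] c by (simp add: wedge_def ext_rel_def)
    ultimately have "ext_eval G w = \<one>" if "w \<in> wedge k" for w
      using that by simp
    moreover have "wedge k \<in> ext_prod G H K"
      unfolding ext_prod_def wedge_def using word[OF kK] by (rule quotientI)
    ultimately show "wedge k \<in> ext_M G H K" by (simp add: ext_M_def)
  qed
  fix k0 assume k0: "k0 \<in> centralizer_in G K x"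
  have "{k \<in> centralizer_in G K x. wedge k = wedge k0} \<subseteq> (\<lambda>s. s \<otimes> k0) ` wedge_kernel G H K x"
  proof safe
    fix k assume k: "k \<in> centralizer_in G K x" and same: "wedge k = wedge k0"
    then have kK: "k \<in> K" by (simp add: centralizer_in_def)
    have "[(x, k, True)] \<in> wedge k0"
      using same ext_eq.refl[where G = G, OF word[OF kK]] unfolding wedge_def ext_rel_def by blast
    then have "k \<otimes> inv k0 \<in> wedge_kernel G H K x"
      using equal_wedges_differ_by_kernel[OF x k0 kK] by (simp add: wedge_def ext_rel_def)
    moreover have "k \<in> carrier G" "k0 \<in> carrier G"
      using kK k0 K_sub by (auto simp: centralizer_in_def)
    then have "k = (k \<otimes> inv k0) \<otimes> k0" by (simp add: m_assoc)
    ultimately show "k \<in> (\<lambda>s. s \<otimes> k0) ` wedge_kernel G H K x" by blast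
  qed
  moreover have finW: "finite (wedge_kernel G H K x)" using finK by (simp add: wedge_kernel_def)
  ultimately have "card {k \<in> centralizer_in G K x. wedge k = wedge k0}
                     \<le> card ((\<lambda>s. s \<otimes> k0) ` wedge_kernel G H K x)"
    by (intro card_mono) simp_all
  also have "\<dots> \<le> card (wedge_kernel G H K x)" using finW by (rule card_image_le)
  finally show "card {k \<in> centralizer_in G K x. wedge k = wedge k0} \<le> card (wedge_kernel G H K x)" .
qed

text \<open>Conjugation by g maps C_K(x) injectively into C_K(gxg^-1), as K is normal.\<close>

lemma card_centralizer_le_conjg:
  assumes finK: "finite K" and g: "g \<in> carrier G" and x: "x \<in> carrier G"
  shows "card (centralizer_in G K x) \<le> card (centralizer_in G K (conjg G g x))"
proof (rule card_inj_on_le[where f = "conjg G g"])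
  show "inj_on (conjg G g) (centralizer_in G K x)"
  proof (rule inj_onI)
    fix a b assume "a \<in> centralizer_in G K x" "b \<in> centralizer_in G K x"
      and eq: "conjg G g a = conjg G g b"
    then have "a \<in> carrier G" "b \<in> carrier G" using K_sub by (auto simp: centralizer_in_def)
    then show "a = b" using eq conjg_inv_conjg[OF g] by metis
  qed
  show "conjg G g ` centralizer_in G K x \<subseteq> centralizer_in G K (conjg G g x)"
  proof (rule image_subsetI)
    fix k assume "k \<in> centralizer_in G K x"
    then have k: "k \<in> K" "k \<in> carrier G" "k \<otimes> x = x \<otimes> k"
      using K_sub by (auto simp: centralizer_in_def)
    then have "conjg G g k \<in> K"
      using g K_normal unfolding conjg_def by (simp add: normal.inv_op_closed2)
    moreover have "conjg G g k \<otimes> conjg G g x = conjg G g x \<otimes> conjg G g k"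
      using k g x by (simp add: conjg_mult[symmetric])
    ultimately show "conjg G g k \<in> centralizer_in G K (conjg G g x)"
      by (simp add: centralizer_in_def)
  qed
  show "finite (centralizer_in G K (conjg G g x))" using finK by (simp add: centralizer_in_def)
qed

lemma card_centralizer_conjg:
  assumes finK: "finite K" and g: "g \<in> carrier G" and x: "x \<in> carrier G"
  shows "card (centralizer_in G K (conjg G g x)) = card (centralizer_in G K x)"
  using card_centralizer_le_conjg[OF finK g x]
    card_centralizer_le_conjg[OF finK inv_closed[OF g] conjg_closed[OF g x]] g x
  by (simp add: conjg_inv_conjg)

lemma alpha_conjg:
  assumes "finite K" "g \<in> carrier G" "x \<in> carrier G"
  shows "alpha G K m (conjg G g x) = alpha G K m x"
proof -
  have "conjg G g x [^] m = conjg G g (x [^] m)" using assms(2,3) conjg_pow by simp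
  then show ?thesis using assms card_centralizer_conjg by (simp add: alpha_def)
qed

lemma alpha_in_class_values:
  assumes finK: "finite K" and h: "h \<in> H"
    and rep: "\<And>C. C \<in> K_classes G H K \<Longrightarrow> rep C \<in> C"
  shows "alpha G K m h \<in> (\<lambda>C. alpha G K m (rep C)) ` K_classes G H K"
proof -
  define C where "C = {conjg G k h | k. k \<in> K}"
  have C: "C \<in> K_classes G H K" unfolding C_def K_classes_def using h by blast
  then obtain k where "k \<in> K" "rep C = conjg G k h" using rep unfolding C_def by blast
  moreover have "h \<in> carrier G" "k \<in> carrier G" using h \<open>k \<in> K\<close> H_sub K_sub by auto
  ultimately have "alpha G K m (rep C) = alpha G K m h"
    using alpha_conjg[OF finK] by simp
  then show ?thesis using C by (metis image_eqI)
qed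

lemma card_centralizer_pos:
  assumes "finite K" "x \<in> carrier G"
  shows "card (centralizer_in G K x) > 0"
  using assms subgroup.one_closed[OF K_subgroup] by (auto simp: centralizer_in_def card_gt_0_iff)

lemma alpha_mult_card_centralizer:
  assumes "finite K" "h \<in> H"
  shows "alpha G K m h * card (centralizer_in G K h) = card (centralizer_in G K (h [^] m))"
  using card_centralizer_pos[OF assms(1), of h] assms H_sub by (auto simp: alpha_def)

lemma pow_in_H: "h \<in> H \<Longrightarrow> h [^] (n::nat) \<in> H"
  using normal_imp_subgroup[OF H_normal]
  by (induction n) (auto simp: subgroup.one_closed subgroup.m_closed)

lemma wedge_kernel_pow_le_alpha:
  assumes "finite K" "h \<in> H"
  shows "card (wedge_kernel G H K (h [^] m)) \<le> alpha G K m h * card (centralizer_in G K h)"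
  using alpha_mult_card_centralizer[OF assms] wedge_kernel_subset_centralizer[OF pow_in_H[OF assms(2)]]
    assms(1) by (simp add: card_mono centralizer_in_def)

lemma alpha_le_M_wedge_kernel_pow:
  assumes "finite K" "h \<in> H" "finite (ext_M G H K)"
  shows "alpha G K m h * card (centralizer_in G K h)
           \<le> real (card (ext_M G H K)) * card (wedge_kernel G H K (h [^] m))"
  using alpha_mult_card_centralizer[OF assms(1,2)]
    card_centralizer_le_M_wedge_kernel[OF pow_in_H[OF assms(2)] assms(1,3)]
  by (metis of_nat_le_iff of_nat_mult)

lemma d_ext_as_sum:
  assumes "finite H" "finite K"
  shows "d_ext G m H K
           = (\<Sum>h\<in>H. real (card (wedge_kernel G H K (h [^] m)))) / (real (card H) * real (card K))"
proof -
  have "{(h, k). h \<in> H \<and> k \<in> K \<and> ext_trivial G H K (h [^] m) k}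
          = Sigma H (\<lambda>h. wedge_kernel G H K (h [^] m))"
    by (auto simp: wedge_kernel_def)
  then show ?thesis
    using assms by (simp add: d_ext_def card_SigmaI wedge_kernel_def of_nat_sum)
qed

lemma d_comm_as_sum:
  assumes "finite H" "finite K"
  shows "d_comm G H K
           = (\<Sum>h\<in>H. real (card (centralizer_in G K h))) / (real (card H) * real (card K))"
proof -
  have "{(h, k). h \<in> H \<and> k \<in> K \<and> h \<otimes> k = k \<otimes> h} = Sigma H (centralizer_in G K)"
    by (auto simp: centralizer_in_def)
  then show ?thesis
    using assms by (simp add: d_comm_def card_SigmaI centralizer_in_def of_nat_sum)
qed

lemma d_ext_le_bound:
  assumes finH: "finite H" and finK: "finite K" and bound: "\<And>h. h \<in> H \<Longrightarrow> alpha G K m h \<le> b"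
  shows "d_ext G m H K \<le> b * d_comm G H K"
proof -
  have "(\<Sum>h\<in>H. real (card (wedge_kernel G H K (h [^] m))))
          \<le> (\<Sum>h\<in>H. b * real (card (centralizer_in G K h)))"
  proof (rule sum_mono)
    fix h assume h: "h \<in> H"
    have "real (card (wedge_kernel G H K (h [^] m))) \<le> alpha G K m h * card (centralizer_in G K h)"
      by (rule wedge_kernel_pow_le_alpha[OF finK h])
    also have "\<dots> \<le> b * card (centralizer_in G K h)"
      using bound[OF h] by (simp add: mult_right_mono)
    finally show "real (card (wedge_kernel G H K (h [^] m))) \<le> b * card (centralizer_in G K h)" .
  qed
  then show ?thesis
    unfolding d_ext_as_sum[OF finH finK] d_comm_as_sum[OF finH finK]
    by (simp add: sum_distrib_left[symmetric] divide_right_mono)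
qed

lemma d_ext_ge_bound:
  assumes finH: "finite H" and finK: "finite K" and bound: "\<And>h. h \<in> H \<Longrightarrow> b \<le> alpha G K m h"
  shows "b * d_comm G H K / real (card (ext_M G H K)) \<le> d_ext G m H K"
proof (cases "card (ext_M G H K) = 0")
  case True
  then show ?thesis by (simp add: d_ext_def)
next
  case False
  then have finM: "finite (ext_M G H K)" by (rule card_ge_0_finite[OF neq0_conv[THEN iffD1]])
  have "(\<Sum>h\<in>H. b * real (card (centralizer_in G K h)))
          \<le> (\<Sum>h\<in>H. real (card (ext_M G H K)) * card (wedge_kernel G H K (h [^] m)))"
  proof (rule sum_mono)
    fix h assume h: "h \<in> H"
    have "b * card (centralizer_in G K h) \<le> alpha G K m h * card (centralizer_in G K h)"
      using bound[OF h] by (simp add: mult_right_mono)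
    also have "\<dots> \<le> real (card (ext_M G H K)) * card (wedge_kernel G H K (h [^] m))"
      by (rule alpha_le_M_wedge_kernel_pow[OF finK h finM])
    finally show "b * card (centralizer_in G K h)
                    \<le> real (card (ext_M G H K)) * card (wedge_kernel G H K (h [^] m))" .
  qed
  then have "b * d_comm G H K \<le> d_ext G m H K * card (ext_M G H K)"
    unfolding d_ext_as_sum[OF finH finK] d_comm_as_sum[OF finH finK]
    by (simp add: sum_distrib_left[symmetric] divide_right_mono mult.commute)
  then show ?thesis using False by (simp add: pos_divide_le_eq)
qed

end
end

theorem mainTheorem7:
  fixes G :: "('a, 'b) monoid_scheme" and H K :: "'a set" and m :: nat
    and rep :: "'a set \<Rightarrow> 'a"
  assumes "group G" and "finite (carrier G)"
    and "H \<lhd> G" and "K \<lhd> G"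
    and "H <#>\<^bsub>G\<^esub> K = carrier G"
    and "m \<ge> 1"
    and "\<And>C. C \<in> K_classes G H K \<Longrightarrow> rep C \<in> C"
  shows "Min ((\<lambda>C. alpha G K m (rep C)) ` K_classes G H K) * d_comm G H K
           / real (card (ext_M G H K)) \<le> d_ext G m H K
       \<and> d_ext G m H K \<le> Max ((\<lambda>C. alpha G K m (rep C)) ` K_classes G H K) * d_comm G H K"
proof -
  note normal = assms(1,3,4)
  have finH: "finite H" and finK: "finite K"
    using group.H_sub[OF normal] group.K_sub[OF normal] assms(2) finite_subset by blast+
  define A where "A = (\<lambda>C. alpha G K m (rep C)) ` K_classes G H K"
  have finA: "finite A" using finH by (simp add: A_def K_classes_def)
  have alpha_in_A: "alpha G K m h \<in> A" if "h \<in> H" for h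
    using group.alpha_in_class_values[OF normal finK that assms(7)] by (simp add: A_def)
  have "Min A * d_comm G H K / real (card (ext_M G H K)) \<le> d_ext G m H K"
    using group.d_ext_ge_bound[OF normal finH finK] Min_le[OF finA alpha_in_A] by blast
  moreover have "d_ext G m H K \<le> Max A * d_comm G H K"
    using group.d_ext_le_bound[OF normal finH finK] Max_ge[OF finA alpha_in_A] by blast
  ultimately show ?thesis by (simp add: A_def)
qed

end
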